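(* Consider a zero-one knapsack instance with $n$ items, integer capacity $W>0$, positive integer weights $w_i$ and integer profits $v_i$, and let $\mathcal{S}^*$ be its set of optimal solutions. Suppose the tables $V(i,w)$, $C(i,w)$ are given, defined by: $V(0,w)=0$, $C(0,w)=1$ for $0\le w\le W$; $V(i,w)=-\infty$, $C(i,w)=0$ for $w<0$; and for $1\le i\le n$, $0\le w\le W$, $V(i,w)=\max\{V(i-1,w),V(i-1,w-w_i)+v_i\}$ and $C(i,w)=C(i-1,w)+C(i-1,w-w_i)$ if $V(i-1,w)=V(i-1,w-w_i)+v_i$, $C(i,w)=C(i-1,w)$ if $V(i-1,w)>V(i-1,w-w_i)+v_i$, and $C(i,w)=C(i-1,w-w_i)$ otherwise. Consider the algorithm that, given a positive integer $k$, repeats the following procedure $k$ times independently and returns the collection of the $k$ outputs: start with $L=\emptyset$, $i=n$, $w=W$; while $i>0$ and $w>0$: if $w_i\le w$ and $V(i,w)=V(i-1,w)=V(i-1,w-w_i)+v_i$, then with probability $C(i-1,w-w_i)/C(i,w)$ add $i$ to $L$ and set $w\leftarrow w-w_i$; else if $V(i,w)>V(i-1,w)$, add $i$ to $L$ and set $w\leftarrow w-w_i$; then set $i\leftarrow i-1$; output $L$. This algorithm produces $k$ samples, each distributed uniformly at random on $\mathcal{S}^*$, in time $O(kn)$.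
   Context: For $s\subseteq[n]=\{1,\dots,n\}$ let $w(s)=\sum_{i\in s}w_i$ and $v(s)=\sum_{i\in s}v_i$. The set of feasible solutions is $\mathcal{S}=\{s\subseteq[n]: w(s)\le W\}$, $v_{\max}=\max_{s\in\mathcal{S}}v(s)$, and $\mathcal{S}^*=\{s\in\mathcal{S}: v(s)=v_{\max}\}$. Running time counts each table lookup, comparison, arithmetic operation and random draw as a constant-time operation. *)

theory Defs
  imports "HOL-Probability.Probability"
begin

text \<open>Knapsack instance: n items indexed 1..n, weights wt i, profits v i (integers),
  capacity W.  Items outside 1..n are irrelevant.\<close>

definition wsum :: "(nat \<Rightarrow> int) \<Rightarrow> nat set \<Rightarrow> int" where
  "wsum f s = (\<Sum>i\<in>s. f i)"

definition feasible :: "nat \<Rightarrow> (nat \<Rightarrow> int) \<Rightarrow> int \<Rightarrow> nat set set" where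
  "feasible n wt W = {s. s \<subseteq> {1..n} \<and> wsum wt s \<le> W}"

definition vmax :: "nat \<Rightarrow> (nat \<Rightarrow> int) \<Rightarrow> (nat \<Rightarrow> int) \<Rightarrow> int \<Rightarrow> int" where
  "vmax n wt v W = Max (wsum v ` feasible n wt W)"

definition opt_sols :: "nat \<Rightarrow> (nat \<Rightarrow> int) \<Rightarrow> (nat \<Rightarrow> int) \<Rightarrow> int \<Rightarrow> nat set set" where
  "opt_sols n wt v W = {s \<in> feasible n wt W. wsum v s = vmax n wt v W}"

text \<open>The DP table V(i,w), with -\<infinity> for w < 0.  (For w > W the paper leaves it
  undefined; we use the same recurrence, which is never consulted there.)\<close>
fun Vtab :: "(nat \<Rightarrow> int) \<Rightarrow> (nat \<Rightarrow> int) \<Rightarrow> nat \<Rightarrow> int \<Rightarrow> ereal" where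
  "Vtab wt v 0 w = (if w < 0 then -\<infinity> else 0)"
| "Vtab wt v (Suc i) w = (if w < 0 then -\<infinity> else
      max (Vtab wt v i w) (Vtab wt v i (w - wt (Suc i)) + ereal (v (Suc i))))"

fun Ctab :: "(nat \<Rightarrow> int) \<Rightarrow> (nat \<Rightarrow> int) \<Rightarrow> nat \<Rightarrow> int \<Rightarrow> nat" where
  "Ctab wt v 0 w = (if w < 0 then 0 else 1)"
| "Ctab wt v (Suc i) w = (if w < 0 then 0 else
      (if Vtab wt v i w = Vtab wt v i (w - wt (Suc i)) + ereal (v (Suc i))
       then Ctab wt v i w + Ctab wt v i (w - wt (Suc i))
       else if Vtab wt v i w > Vtab wt v i (w - wt (Suc i)) + ereal (v (Suc i))
       then Ctab wt v i w
       else Ctab wt v i (w - wt (Suc i))))"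

text \<open>The result is a
  distribution over pairs (L, t): L is the output set (items added from the current i
  downwards), t the number of elementary operations (table lookups, comparisons,
  arithmetic operations, random draws) executed.  Operation counts per step:
  loop test (i>0, w>0): 2 comparisons;
  first condition: lookup w_i, compare with w (2); lookups V(i,w), V(i-1,w),
    subtraction w-w_i, lookup V(i-1,w-w_i), lookup v_i, addition, 2 comparisons (8);
  random branch: 2 lookups of C, division, random draw, comparison, insertion into L,
    subtraction (7);
  second condition: 2 lookups, 1 comparison (3); taking it: insertion, subtraction (2);
  decrement of i: 1; output: 1.\<close>
fun sample_run :: "(nat \<Rightarrow> int) \<Rightarrow> (nat \<Rightarrow> int) \<Rightarrow> nat \<Rightarrow> int \<Rightarrow> (nat set \<times> nat) pmf" where
  "sample_run wt v 0 w = return_pmf ({}, 1 + 1)"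
| "sample_run wt v (Suc j) w =
     (if \<not> (0 < w) then return_pmf ({}, 2 + 1)
      else if wt (Suc j) \<le> w \<and> Vtab wt v (Suc j) w = Vtab wt v j w
              \<and> Vtab wt v j w = Vtab wt v j (w - wt (Suc j)) + ereal (v (Suc j))
      then do {
        b \<leftarrow> bernoulli_pmf (real (Ctab wt v j (w - wt (Suc j))) / real (Ctab wt v (Suc j) w));
        (L, t) \<leftarrow> sample_run wt v j (if b then w - wt (Suc j) else w);
        return_pmf (if b then insert (Suc j) L else L, t + 2 + 10 + 7 + 1)
      }
      else if Vtab wt v (Suc j) w > Vtab wt v j w
      then map_pmf (\<lambda>(L, t). (insert (Suc j) L, t + 2 + 10 + 3 + 2 + 1))
             (sample_run wt v j (w - wt (Suc j)))
      else map_pmf (\<lambda>(L, t). (L, t + 2 + 10 + 3 + 1))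
             (sample_run wt v j w))"

fun iid_list :: "nat \<Rightarrow> 'a pmf \<Rightarrow> 'a list pmf" where
  "iid_list 0 p = return_pmf []"
| "iid_list (Suc k) p = do { x \<leftarrow> p; xs \<leftarrow> iid_list k p; return_pmf (x # xs) }"

definition knapsack_sampler ::
  "nat \<Rightarrow> (nat \<Rightarrow> int) \<Rightarrow> (nat \<Rightarrow> int) \<Rightarrow> int \<Rightarrow> nat \<Rightarrow> (nat set list \<times> nat) pmf" where
  "knapsack_sampler n wt v W k =
     map_pmf (\<lambda>rs. (map fst rs, sum_list (map snd rs))) (iid_list k (sample_run wt v n W))"

end

theory Submission
  imports Defs
begin

text \<open>
  With positive weights, \<open>V(j,w)\<close> is the optimal value of the sub-instance with items
  \<open>1..j\<close> and capacity \<open>w\<close> (the supremum over its feasible sets, \<open>-\<infinity>\<close> if there are none).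
  The feasible sets of the sub-instance \<open>(j+1,w)\<close> are those of \<open>(j,w)\<close> together with
  those of \<open>(j,w-w\<^sub>j\<^sub>+\<^sub>1)\<close> extended by \<open>j+1\<close>, so its optimal sets are the optimal sets
  of whichever of the two parts has the larger value, or both in case of a tie; hence
  \<open>C(j,w)\<close> counts them. Induction on \<open>j\<close> then shows that a run started in \<open>(j,w)\<close> is
  uniform on them: in the tie case the run enters the second part with probability
  proportional to its size, and such a Bernoulli mixture of the uniform distributions on
  two disjoint sets is uniform on their union. Every loop iteration costs a bounded number
  of operations, which gives the running time.
\<close>

definition maximizers :: "('a \<Rightarrow> 'b::complete_linorder) \<Rightarrow> 'a set \<Rightarrow> 'a set" where
  "maximizers f A = {x \<in> A. f x = (SUP y\<in>A. f y)}"

lemma maximizers_empty [simp]: "maximizers f {} = {}"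
  by (simp add: maximizers_def)

lemma maximizers_singleton [simp]: "maximizers f {x} = {x}"
  by (auto simp: maximizers_def)

lemma maximizers_cong: "(\<And>x. x \<in> A \<Longrightarrow> f x = g x) \<Longrightarrow> maximizers f A = maximizers g A"
  by (auto simp: maximizers_def cong: SUP_cong)

lemma maximizers_image: "maximizers f (h ` A) = h ` maximizers (f \<circ> h) A"
  by (auto simp: maximizers_def image_image)

lemma maximizers_Un:
  "maximizers f (A \<union> B) =
     (if (SUP x\<in>B. f x) \<le> (SUP x\<in>A. f x) then maximizers f A else {}) \<union>
     (if (SUP x\<in>A. f x) \<le> (SUP x\<in>B. f x) then maximizers f B else {})"
proof -
  have "f x = max (SUP x\<in>A. f x) (SUP x\<in>B. f x) \<longleftrightarrow>
          (SUP x\<in>B. f x) \<le> (SUP x\<in>A. f x) \<and> f x = (SUP x\<in>A. f x)" if "x \<in> A" for x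
    using SUP_upper[OF that, of f] by (auto simp: max_def)
  moreover have "f x = max (SUP x\<in>A. f x) (SUP x\<in>B. f x) \<longleftrightarrow>
          (SUP x\<in>A. f x) \<le> (SUP x\<in>B. f x) \<and> f x = (SUP x\<in>B. f x)" if "x \<in> B" for x
    using SUP_upper[OF that, of f] by (auto simp: max_def)
  ultimately show ?thesis
    by (auto simp: maximizers_def SUP_union sup_max)
qed

lemma maximizers_add_ereal:
  "maximizers (\<lambda>x. f x + ereal c) A = maximizers f A"
proof (cases "A = {}")
  case False
  then show ?thesis
    by (simp add: maximizers_def SUP_ereal_add_left ereal_add_cancel_right)
qed simp

lemma maximizers_nonempty:
  fixes f :: "'a \<Rightarrow> 'b::complete_linorder"
  assumes "finite A" "A \<noteq> {}"
  shows "maximizers f A \<noteq> {}"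
proof -
  have "(SUP x\<in>A. f x) \<in> f ` A"
    using assms by (simp add: Max_Sup[symmetric])
  then show ?thesis by (auto simp: maximizers_def)
qed

lemma bernoulli_bind_pmf_of_set_disjoint_Un:
  assumes "finite A" "finite B" "A \<noteq> {}" "B \<noteq> {}" "A \<inter> B = {}"
  shows "bernoulli_pmf (real (card B) / real (card (A \<union> B))) \<bind>
           (\<lambda>c. if c then pmf_of_set B else pmf_of_set A) = pmf_of_set (A \<union> B)"
proof (rule pmf_eqI)
  fix x
  have card_Un: "card (A \<union> B) = card A + card B"
    using assms card_Un_disjoint by blast
  have "card A > 0" "card B > 0"
    using assms by auto
  then show "pmf (bernoulli_pmf (real (card B) / real (card (A \<union> B))) \<bind>
           (\<lambda>c. if c then pmf_of_set B else pmf_of_set A)) x = pmf (pmf_of_set (A \<union> B)) x"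
    using assms card_Un
    by (cases "x \<in> A"; cases "x \<in> B") (auto simp: pmf_bind indicator_def field_simps)
qed

lemma map_pmf_iid_list: "map_pmf (map f) (iid_list k p) = iid_list k (map_pmf f p)"
proof (induction k)
  case (Suc k)
  then show ?case by (simp add: Suc.IH[symmetric] map_bind_pmf bind_map_pmf)
qed simp

lemma set_pmf_iid_list:
  "xs \<in> set_pmf (iid_list k p) \<Longrightarrow> length xs = k \<and> set xs \<subseteq> set_pmf p"
  by (induction k arbitrary: xs) fastforce+

lemma wsum_insert: "finite S \<Longrightarrow> i \<notin> S \<Longrightarrow> wsum f (insert i S) = f i + wsum f S"
  by (simp add: wsum_def)

lemma finite_feasible: "finite (feasible j wt w)"
  by (rule finite_subset[of _ "Pow {1..j}"]) (auto simp: feasible_def)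

lemma feasible_0: "feasible 0 wt w = (if 0 \<le> w then {{}} else {})"
  by (auto simp: feasible_def wsum_def)

lemma Suc_notin_feasible: "S \<in> feasible j wt w \<Longrightarrow> Suc j \<notin> S"
  by (auto simp: feasible_def)

lemma wsum_insert_feasible:
  "S \<in> feasible j wt w \<Longrightarrow> wsum f (insert (Suc j) S) = f (Suc j) + wsum f S"
  using Suc_notin_feasible finite_feasible
  by (metis feasible_def finite_atLeastAtMost finite_subset mem_Collect_eq wsum_insert)

lemma feasible_Suc:
  "feasible (Suc j) wt w = feasible j wt w \<union> insert (Suc j) ` feasible j wt (w - wt (Suc j))"
proof (intro set_eqI iffI)
  fix S assume S: "S \<in> feasible (Suc j) wt w"
  show "S \<in> feasible j wt w \<union> insert (Suc j) ` feasible j wt (w - wt (Suc j))"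
  proof (cases "Suc j \<in> S")
    case True
    have "finite S"
      using S by (auto simp: feasible_def intro: finite_subset)
    then have "S - {Suc j} \<in> feasible j wt (w - wt (Suc j))"
      using S True by (auto simp: feasible_def wsum_def sum.remove)
    then show ?thesis
      using True by (auto intro!: image_eqI[of _ _ "S - {Suc j}"])
  next
    case False
    then show ?thesis
      using S by (auto simp: feasible_def le_Suc_eq)
  qed
next
  fix S assume "S \<in> feasible j wt w \<union> insert (Suc j) ` feasible j wt (w - wt (Suc j))"
  then show "S \<in> feasible (Suc j) wt w"
  proof
    assume "S \<in> feasible j wt w"
    then show ?thesis by (auto simp: feasible_def)
  next
    assume "S \<in> insert (Suc j) ` feasible j wt (w - wt (Suc j))"
    then obtain T where T: "T \<in> feasible j wt (w - wt (Suc j))" "S = insert (Suc j) T"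
      by blast
    then show ?thesis
      using wsum_insert_feasible[OF T(1), of wt] by (auto simp: feasible_def)
  qed
qed

lemma feasible_neg_capacity:
  assumes "\<forall>i\<in>{1..j}. wt i > 0" and "w < 0"
  shows "feasible j wt w = {}"
proof (rule equals0I)
  fix S assume "S \<in> feasible j wt w"
  then have S: "S \<subseteq> {1..j}" "wsum wt S \<le> w"
    by (auto simp: feasible_def)
  have "0 \<le> wsum wt S"
    unfolding wsum_def by (intro sum_nonneg) (meson assms(1) less_imp_le subsetD S(1))
  then show False
    using S(2) assms(2) by simp
qed

lemma feasible_zero_capacity:
  assumes "\<forall>i\<in>{1..j}. wt i > 0"
  shows "feasible j wt 0 = {{}}"
proof (intro equalityI subsetI)
  fix S assume "S \<in> feasible j wt 0"
  then have S: "S \<subseteq> {1..j}" "wsum wt S \<le> 0"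
    by (auto simp: feasible_def)
  have "finite S"
    using S(1) by (rule finite_subset) simp
  have "\<not> 0 < wsum wt S"
    using S(2) by simp
  then have "i \<notin> S" for i
    unfolding wsum_def using sum_pos2[OF \<open>finite S\<close>, of i wt] assms S(1)
    by (meson less_imp_le subsetD)
  then show "S \<in> {{}}"
    by auto
qed (simp add: feasible_def wsum_def)

lemma empty_in_feasible: "0 \<le> w \<Longrightarrow> {} \<in> feasible j wt w"
  by (simp add: feasible_def wsum_def)

text \<open>When nothing is feasible, \<^const>\<open>vmax\<close> is the maximum of the empty set, an
  unspecified value; both sides are empty then.\<close>

lemma opt_sols_eq_maximizers:
  "opt_sols j wt v w = maximizers (\<lambda>S. ereal (wsum v S)) (feasible j wt w)"
proof (cases "feasible j wt w = {}")
  case False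
  have "ereal (vmax j wt v w) = Max (ereal ` wsum v ` feasible j wt w)"
    unfolding vmax_def using False finite_feasible
    by (intro mono_Max_commute) (auto simp: mono_def)
  also have "\<dots> = (SUP S\<in>feasible j wt w. ereal (wsum v S))"
    using False finite_feasible by (simp add: Max_Sup image_image)
  finally have Sup_eq: "(SUP S\<in>feasible j wt w. ereal (wsum v S)) = ereal (vmax j wt v w)" ..
  show ?thesis
    by (auto simp: opt_sols_def maximizers_def Sup_eq)
qed (simp add: opt_sols_def)

lemma SUP_insert_feasible:
  "(SUP S\<in>insert (Suc j) ` feasible j wt w. ereal (wsum v S))
     = (SUP S\<in>feasible j wt w. ereal (wsum v S)) + ereal (v (Suc j))"
proof (cases "feasible j wt w = {}")
  case False
  have "(SUP S\<in>insert (Suc j) ` feasible j wt w. ereal (wsum v S))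
      = (SUP S\<in>feasible j wt w. ereal (wsum v S) + ereal (v (Suc j)))"
    unfolding image_image by (rule SUP_cong) (simp_all add: wsum_insert_feasible add.commute)
  also have "\<dots> = (SUP S\<in>feasible j wt w. ereal (wsum v S)) + ereal (v (Suc j))"
    using False by (intro SUP_ereal_add_left) auto
  finally show ?thesis .
qed (simp add: bot_ereal_def)

lemma maximizers_insert_feasible:
  "maximizers (\<lambda>S. ereal (wsum v S)) (insert (Suc j) ` feasible j wt w)
     = insert (Suc j) ` maximizers (\<lambda>S. ereal (wsum v S)) (feasible j wt w)"
proof -
  have "maximizers ((\<lambda>S. ereal (wsum v S)) \<circ> insert (Suc j)) (feasible j wt w)
      = maximizers (\<lambda>S. ereal (wsum v S) + ereal (v (Suc j))) (feasible j wt w)"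
    by (rule maximizers_cong) (simp add: wsum_insert_feasible)
  then show ?thesis
    by (simp only: maximizers_image maximizers_add_ereal)
qed

lemma Vtab_neg_capacity: "w < 0 \<Longrightarrow> Vtab wt v j w = -\<infinity>"
  by (cases j) auto

lemma Vtab_nonneg: "0 \<le> w \<Longrightarrow> 0 \<le> Vtab wt v j w"
proof (induction j)
  case (Suc j)
  then show ?case by (simp add: max.coboundedI1)
qed simp

lemma Vtab_eq_SUP:
  assumes "\<forall>i\<in>{1..j}. wt i > 0"
  shows "Vtab wt v j w = (SUP S\<in>feasible j wt w. ereal (wsum v S))"
  using assms
proof (induction j arbitrary: w)
  case 0
  then show ?case
    by (simp add: feasible_0 wsum_def bot_ereal_def)
next
  case (Suc j)
  then have IH: "Vtab wt v j u = (SUP S\<in>feasible j wt u. ereal (wsum v S))" for u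
    by simp
  show ?case
  proof (cases "w < 0")
    case False
    then show ?thesis
      by (simp add: feasible_Suc SUP_union sup_max SUP_insert_feasible IH)
  qed (use Suc.prems in \<open>simp add: feasible_neg_capacity bot_ereal_def\<close>)
qed

lemma opt_sols_Suc:
  fixes v :: "nat \<Rightarrow> int" and w :: int
  assumes "\<forall>i\<in>{1..Suc j}. wt i > 0"
  defines "a \<equiv> Vtab wt v j w" and "b \<equiv> Vtab wt v j (w - wt (Suc j)) + ereal (v (Suc j))"
  shows "opt_sols (Suc j) wt v w =
           (if b \<le> a then opt_sols j wt v w else {}) \<union>
           (if a \<le> b then insert (Suc j) ` opt_sols j wt v (w - wt (Suc j)) else {})"
proof -
  have pos: "\<forall>i\<in>{1..j}. wt i > 0"
    using assms(1) by simp
  have "a = (SUP S\<in>feasible j wt w. ereal (wsum v S))"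
    and "b = (SUP S\<in>insert (Suc j) ` feasible j wt (w - wt (Suc j)). ereal (wsum v S))"
    unfolding a_def b_def SUP_insert_feasible Vtab_eq_SUP[OF pos] by simp_all
  then show ?thesis
    by (simp add: opt_sols_eq_maximizers feasible_Suc maximizers_Un maximizers_insert_feasible)
qed

lemma opt_sols_subset_feasible: "opt_sols j wt v w \<subseteq> feasible j wt w"
  by (auto simp: opt_sols_def)

lemma finite_opt_sols: "finite (opt_sols j wt v w)"
  using finite_feasible opt_sols_subset_feasible by (rule finite_subset[rotated])

lemma inj_on_insert_opt_sols: "inj_on (insert (Suc j)) (opt_sols j wt v w)"
  by (rule inj_onI) (metis Suc_notin_feasible insert_ident opt_sols_subset_feasible subsetD)

lemma opt_sols_disjoint_insert: "opt_sols j wt v w \<inter> insert (Suc j) ` X = {}"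
  using Suc_notin_feasible opt_sols_subset_feasible by blast

lemma card_opt_sols_eq_Ctab:
  assumes "\<forall>i\<in>{1..j}. wt i > 0"
  shows "card (opt_sols j wt v w) = Ctab wt v j w"
  using assms
proof (induction j arbitrary: w)
  case 0
  then show ?case
    by (simp add: opt_sols_eq_maximizers feasible_0)
next
  case (Suc j)
  show ?case
  proof (cases "w < 0")
    case True
    then show ?thesis
      using Suc.prems by (simp add: opt_sols_eq_maximizers feasible_neg_capacity)
  next
    case False
    let ?A = "opt_sols j wt v w" and ?B = "opt_sols j wt v (w - wt (Suc j))"
    have "card (insert (Suc j) ` ?B) = card ?B"
      using inj_on_insert_opt_sols by (rule card_image)
    moreover have "card (?A \<union> insert (Suc j) ` ?B) = card ?A + card (insert (Suc j) ` ?B)"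
      by (intro card_Un_disjoint finite_opt_sols finite_imageI opt_sols_disjoint_insert)
    moreover have "card ?A = Ctab wt v j w" "card ?B = Ctab wt v j (w - wt (Suc j))"
      using Suc by simp_all
    ultimately show ?thesis
      using False Suc.prems by (auto simp: opt_sols_Suc)
  qed
qed

lemma opt_sols_nonempty: "0 \<le> w \<Longrightarrow> opt_sols j wt v w \<noteq> {}"
  unfolding opt_sols_eq_maximizers
  by (intro maximizers_nonempty finite_feasible) (use empty_in_feasible in blast)

lemma opt_sols_zero_capacity:
  "\<forall>i\<in>{1..j}. wt i > 0 \<Longrightarrow> opt_sols j wt v 0 = {{}}"
  by (simp add: opt_sols_eq_maximizers feasible_zero_capacity)

lemma item_fits_if_Vtab_le:
  assumes "0 \<le> w" and "Vtab wt v j w \<le> Vtab wt v j (w - wt (Suc j)) + ereal (v (Suc j))"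
  shows "wt (Suc j) \<le> w"
proof (rule ccontr)
  assume "\<not> wt (Suc j) \<le> w"
  then show False
    using assms Vtab_nonneg[OF assms(1), of wt v j] by (simp add: Vtab_neg_capacity)
qed

lemma map_fst_sample_run_Suc:
  fixes wt v :: "nat \<Rightarrow> int" and j :: nat and w :: int
  assumes "0 < w"
  defines "a \<equiv> Vtab wt v j w" and "b \<equiv> Vtab wt v j (w - wt (Suc j)) + ereal (v (Suc j))"
    and "w' \<equiv> w - wt (Suc j)"
  shows "map_pmf fst (sample_run wt v (Suc j) w) =
    (if a = b then
       bernoulli_pmf (real (Ctab wt v j w') / real (Ctab wt v (Suc j) w)) \<bind>
         (\<lambda>c. if c then map_pmf (insert (Suc j)) (map_pmf fst (sample_run wt v j w'))
              else map_pmf fst (sample_run wt v j w))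
     else if a < b then map_pmf (insert (Suc j)) (map_pmf fst (sample_run wt v j w'))
     else map_pmf fst (sample_run wt v j w))"
proof -
  have V: "Vtab wt v (Suc j) w = max a b"
    using assms(1) by (simp add: a_def b_def)
  have tie: "(wt (Suc j) \<le> w \<and> Vtab wt v (Suc j) w = Vtab wt v j w
              \<and> Vtab wt v j w = Vtab wt v j (w - wt (Suc j)) + ereal (v (Suc j))) \<longleftrightarrow> a = b"
    using item_fits_if_Vtab_le[of w wt v j] assms(1) by (auto simp: V a_def b_def)
  have gain: "Vtab wt v j w < Vtab wt v (Suc j) w \<longleftrightarrow> a < b"
    using V by (simp add: a_def[symmetric] less_max_iff_disj del: Vtab.simps)
  have run: "sample_run wt v (Suc j) w =
    (if a = b then
       bernoulli_pmf (real (Ctab wt v j w') / real (Ctab wt v (Suc j) w)) \<bind>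
         (\<lambda>c. sample_run wt v j (if c then w' else w) \<bind>
           (\<lambda>(L, t). return_pmf (if c then insert (Suc j) L else L, t + 2 + 10 + 7 + 1)))
     else if a < b then
       map_pmf (\<lambda>(L, t). (insert (Suc j) L, t + 2 + 10 + 3 + 2 + 1)) (sample_run wt v j w')
     else map_pmf (\<lambda>(L, t). (L, t + 2 + 10 + 3 + 1)) (sample_run wt v j w))"
    unfolding sample_run.simps(2)[of wt v j w] tie gain w'_def
    by (simp only: assms(1) not_True_eq_False if_False)
  show ?thesis
    unfolding run
    by (auto simp del: Ctab.simps simp: map_pmf_def bind_assoc_pmf bind_return_pmf case_prod_beta'
        intro!: bind_pmf_cong)
qed

lemma map_insert_pmf_of_opt_sols:
  "0 \<le> w \<Longrightarrow> map_pmf (insert (Suc j)) (pmf_of_set (opt_sols j wt v w))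
     = pmf_of_set (insert (Suc j) ` opt_sols j wt v w)"
  by (intro map_pmf_of_set_inj inj_on_insert_opt_sols opt_sols_nonempty finite_opt_sols)

lemma sample_run_uniform:
  assumes "\<forall>i\<in>{1..j}. wt i > 0" and "0 \<le> w"
  shows "map_pmf fst (sample_run wt v j w) = pmf_of_set (opt_sols j wt v w)"
  using assms
proof (induction j arbitrary: w)
  case 0
  then show ?case
    by (simp add: opt_sols_eq_maximizers feasible_0 pmf_of_set_singleton)
next
  case (Suc j)
  have pos: "\<forall>i\<in>{1..j}. wt i > 0"
    using Suc.prems(1) by simp
  show ?case
  proof (cases "w = 0")
    case True
    then show ?thesis
      using Suc.prems(1) by (simp add: opt_sols_zero_capacity pmf_of_set_singleton)
  next
    case False
    let ?w' = "w - wt (Suc j)"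
    let ?a = "Vtab wt v j w" and ?b = "Vtab wt v j ?w' + ereal (v (Suc j))"
    let ?A = "opt_sols j wt v w" and ?B = "insert (Suc j) ` opt_sols j wt v ?w'"
    have w: "0 < w"
      using False Suc.prems(2) by simp
    have sample_w: "map_pmf fst (sample_run wt v j w) = pmf_of_set ?A"
      using Suc.IH[OF pos Suc.prems(2)] .
    have fits: "0 \<le> ?w'" if "?a \<le> ?b"
      using item_fits_if_Vtab_le[OF Suc.prems(2)] that by simp
    have sample_w': "map_pmf (insert (Suc j)) (map_pmf fst (sample_run wt v j ?w')) = pmf_of_set ?B"
      if "?a \<le> ?b"
      using fits[OF that] by (simp add: Suc.IH[OF pos] map_insert_pmf_of_opt_sols)
    consider "?a = ?b" | "?a < ?b" | "?b < ?a"
      by fastforce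
    then show ?thesis
    proof cases
      case 1
      have "real (Ctab wt v j ?w') / real (Ctab wt v (Suc j) w) = real (card ?B) / real (card (?A \<union> ?B))"
        using Suc.prems(1) pos 1
        by (simp add: card_opt_sols_eq_Ctab[symmetric] opt_sols_Suc card_image inj_on_insert_opt_sols
            del: Ctab.simps)
      moreover have "bernoulli_pmf (real (card ?B) / real (card (?A \<union> ?B))) \<bind>
          (\<lambda>c. if c then pmf_of_set ?B else pmf_of_set ?A) = pmf_of_set (?A \<union> ?B)"
        using opt_sols_disjoint_insert Suc.prems(2) fits 1
        by (intro bernoulli_bind_pmf_of_set_disjoint_Un finite_opt_sols finite_imageI)
           (auto simp: opt_sols_nonempty)
      ultimately show ?thesis
        using 1 unfolding map_fst_sample_run_Suc[OF w] sample_w sample_w'[OF eq_refl[OF 1]]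
        by (simp add: opt_sols_Suc[OF Suc.prems(1)] del: Ctab.simps)
    next
      case 2
      then have "?a \<le> ?b" "\<not> ?b \<le> ?a" "?a \<noteq> ?b"
        by auto
      then show ?thesis
        unfolding map_fst_sample_run_Suc[OF w] sample_w'[OF less_imp_le[OF 2]]
        by (simp add: opt_sols_Suc[OF Suc.prems(1)] del: Ctab.simps)
    next
      case 3
      then have "?b \<le> ?a" "\<not> ?a \<le> ?b" "\<not> ?a < ?b" "?a \<noteq> ?b"
        by auto
      then show ?thesis
        unfolding map_fst_sample_run_Suc[OF w] sample_w
        by (simp add: opt_sols_Suc[OF Suc.prems(1)] del: Ctab.simps)
    qed
  qed
qed

text \<open>The costliest loop iteration, the random branch, takes 20 operations.\<close>

lemma sample_run_time_le: "r \<in> set_pmf (sample_run wt v j w) \<Longrightarrow> snd r \<le> 20 * j + 3"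
proof (induction j arbitrary: w r)
  case (Suc j)
  then show ?case
    by (auto simp del: Vtab.simps split: if_splits prod.splits) fastforce+
qed simp

theorem theorem3:
  "\<exists>c::real. \<forall>(n::nat) (W::int) (wt::nat \<Rightarrow> int) (v::nat \<Rightarrow> int) (k::nat).
     W > 0 \<longrightarrow> (\<forall>i\<in>{1..n}. wt i > 0) \<longrightarrow> n \<ge> 1 \<longrightarrow> k \<ge> 1 \<longrightarrow>
       map_pmf fst (knapsack_sampler n wt v W k) = iid_list k (pmf_of_set (opt_sols n wt v W))
     \<and> (\<forall>r \<in> set_pmf (knapsack_sampler n wt v W k). real (snd r) \<le> c * real k * real n)"
proof (intro exI[of _ 23] allI impI conjI ballI)
  fix n :: nat and W :: int and wt v :: "nat \<Rightarrow> int" and k :: nat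
  assume W: "W > 0" and pos: "\<forall>i\<in>{1..n}. wt i > 0" and n: "n \<ge> 1" and "k \<ge> 1"
  have "map_pmf fst (knapsack_sampler n wt v W k) = map_pmf (map fst) (iid_list k (sample_run wt v n W))"
    by (simp add: knapsack_sampler_def pmf.map_comp o_def)
  also have "\<dots> = iid_list k (pmf_of_set (opt_sols n wt v W))"
    using W by (simp add: map_pmf_iid_list sample_run_uniform[OF pos])
  finally show "map_pmf fst (knapsack_sampler n wt v W k) = iid_list k (pmf_of_set (opt_sols n wt v W))" .
  fix r assume "r \<in> set_pmf (knapsack_sampler n wt v W k)"
  then obtain rs where rs: "rs \<in> set_pmf (iid_list k (sample_run wt v n W))"
    and r: "snd r = (\<Sum>x\<leftarrow>rs. snd x)"
    by (auto simp: knapsack_sampler_def)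
  have "snd r \<le> (\<Sum>x\<leftarrow>rs. 20 * n + 3)"
    unfolding r using set_pmf_iid_list[OF rs] sample_run_time_le by (intro sum_list_mono) blast
  also have "\<dots> = k * (20 * n + 3)"
    using set_pmf_iid_list[OF rs] by (simp add: sum_list_triv)
  also have "\<dots> \<le> 23 * k * n"
    using n by simp
  finally show "real (snd r) \<le> 23 * real k * real n"
    by (metis of_nat_le_iff of_nat_mult of_nat_numeral)
qed

end
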